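(* Consider the $(1,\lambda)$-CSA-ES with cumulation ($0<c<1$), any $\lambda\ge1$, $d_\sigma>0$, applied to $f(x)=[x]_1$ on $\mathbb{R}^n$. The real-valued Markov chain $([p_t]_1)_{t\in\mathbb{N}}$ is $\varphi$-irreducible and aperiodic, and every compact subset of $\mathbb{R}$ is a small set for it.
   Context: For $x\in\mathbb{R}^n$, $[x]_i$ denotes its $i$-th coordinate. The $(1,\lambda)$-CSA-ES with parameters $\lambda\ge1$, $0<c\le1$, $d_\sigma>0$, minimizing $f:\mathbb{R}^n\to\mathbb{R}$: start from $X_0\in\mathbb{R}^n$, $\sigma_0>0$, $p_0\sim\mathcal{N}(0,I_n)$; at iteration $t$ draw $\xi_{t,1},\ldots,\xi_{t,\lambda}$ i.i.d. $\sim\mathcal{N}(0,I_n)$ independent of the past, children $Y_{t,i}=X_t+\sigma_t\xi_{t,i}$; $X_{t+1}$ is the child with smallest $f$-value and $\xi^\star_t$ the corresponding $\xi_{t,i}$ (so $X_{t+1}=X_t+\sigma_t\xi^\star_t$); path $p_{t+1}=(1-c)p_t+\sqrt{c(2-c)}\,\xi^\star_t$; step-size $\sigma_{t+1}=\sigma_t\exp(\frac{c}{2d_\sigma}(\|p_{t+1}\|^2/n-1))$. On $f(x)=[x]_1$, $([p_t]_1)_t$ satisfies $[p_{t+1}]_1=(1-c)[p_t]_1+\sqrt{c(2-c)}[\xi^\star_t]_1$ with $([\xi^\star_t]_1)_t$ i.i.d., each distributed as the minimum of $\lambda$ i.i.d. standard normals, so it is a Markov chain on $\mathbb{R}$ with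 transition kernel $P$. Definitions: the chain is $\varphi$-irreducible if there is a nonzero measure $\varphi$ on the Borel sets such that for every Borel $A$ with $\varphi(A)>0$ and every starting point, $A$ is reached in finitely many steps with positive probability. A Borel set $C$ is small if there exist $m\ge1$ and a nonzero measure $\nu_m$ with $P^m(x,B)\ge\nu_m(B)$ for all $x\in C$ and Borel $B$. The chain is aperiodic if there is no $d\ge2$ and disjoint Borel sets $D_1,\ldots,D_d$ with $P(x,D_{i+1})=1$ for all $x\in D_i$ (indices mod $d$) and $(\bigcup_i D_i)^c$ being $\varphi$-null. *)

theory Defs
  imports "HOL-Probability.Probability"
begin

definition min_normal_law :: "nat \<Rightarrow> real measure" where
  "min_normal_law lam =
     distr (PiM {..<lam} (\<lambda>_. density lborel std_normal_density)) borel
           (\<lambda>\<omega>. Min (\<omega> ` {..<lam}))"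

text \<open>One-step transition kernel of the first coordinate of the evolution path on f(x) = [x]_1:
  p' = (1-c) p + sqrt(c(2-c)) Z, Z ~ min of lam standard normals.\<close>
definition csa_kernel :: "real \<Rightarrow> nat \<Rightarrow> real \<Rightarrow> real measure" where
  "csa_kernel c lam x =
     distr (min_normal_law lam) borel (\<lambda>z. (1 - c) * x + sqrt (c * (2 - c)) * z)"

fun kernel_pow :: "(real \<Rightarrow> real measure) \<Rightarrow> nat \<Rightarrow> real \<Rightarrow> real measure" where
  "kernel_pow P 0 x = return borel x"
| "kernel_pow P (Suc m) x = bind (kernel_pow P m x) P"

definition phi_irreducible :: "(real \<Rightarrow> real measure) \<Rightarrow> real measure \<Rightarrow> bool" where
  "phi_irreducible P \<phi> \<longleftrightarrow>
     sets \<phi> = sets borel \<and> emeasure \<phi> UNIV \<noteq> 0 \<and>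
     (\<forall>A \<in> sets borel. emeasure \<phi> A > 0 \<longrightarrow>
        (\<forall>x. \<exists>m\<ge>1. emeasure (kernel_pow P m x) A > 0))"

definition small_set :: "(real \<Rightarrow> real measure) \<Rightarrow> real set \<Rightarrow> bool" where
  "small_set P C \<longleftrightarrow> C \<in> sets borel \<and>
     (\<exists>m\<ge>1. \<exists>\<nu>. sets \<nu> = sets borel \<and> emeasure \<nu> UNIV \<noteq> 0 \<and>
        (\<forall>x\<in>C. \<forall>B\<in>sets borel. emeasure (kernel_pow P m x) B \<ge> emeasure \<nu> B))"

definition aperiodic_wrt :: "(real \<Rightarrow> real measure) \<Rightarrow> real measure \<Rightarrow> bool" where
  "aperiodic_wrt P \<phi> \<longleftrightarrow>
     \<not> (\<exists>d::nat. \<exists>D :: nat \<Rightarrow> real set. d \<ge> 2 \<and>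
          (\<forall>i<d. D i \<in> sets borel) \<and>
          (\<forall>i<d. \<forall>j<d. i \<noteq> j \<longrightarrow> D i \<inter> D j = {}) \<and>
          (\<forall>i<d. \<forall>x\<in>D i. emeasure (P x) (D ((i + 1) mod d)) = 1) \<and>
          emeasure \<phi> (- (\<Union>i<d. D i)) = 0)"

end

theory Submission
  imports Defs
begin

text \<open>The minimum of \<open>\<lambda>\<close> independent standard normals has a law equivalent to Lebesgue
  measure, and on a bounded interval it dominates a multiple of Lebesgue measure: the event that
  the first variable lies in \<open>F \<subseteq> [-M, M]\<close> and all others exceed \<open>M\<close> forces the minimum into
  \<open>F\<close> and has probability at least \<open>std_normal_density M \<cdot> |F| \<cdot> P(Z > M)^(\<lambda>-1)\<close>. The
  transition law of the path coordinate is an affine image of this law with bounded shift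
  \<open>(1 - c) x\<close>, so it is again equivalent to Lebesgue measure and dominates a multiple of
  Lebesgue measure on \<open>[-1, 1]\<close>, uniformly for \<open>x\<close> in a compact set. Hence the chain is
  Lebesgue-irreducible, compact sets are small, and a cycle of period \<open>d \<ge> 2\<close> is impossible:
  a point of one cycle class would charge both the next class (with probability one) and the
  class after it.\<close>

lemma emeasure_lborel_affine_preimage:
  fixes s t :: real
  assumes "s > 0" "E \<in> sets borel"
  shows "emeasure lborel E = ennreal s * emeasure lborel {z. t + s * z \<in> E}"
proof -
  have "emeasure lborel E
      = emeasure (density (distr lborel borel (\<lambda>z. t + s * z)) (\<lambda>_. ennreal \<bar>s\<bar>)) E"
    using lborel_real_affine[of s t] assms by simp
  also have "\<dots> = ennreal s * emeasure (distr lborel borel (\<lambda>z. t + s * z)) E"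
    using assms by (subst emeasure_density_const) auto
  also have "\<dots> = ennreal s * emeasure lborel {z. t + s * z \<in> E}"
    using assms by (subst emeasure_distr) (auto simp: vimage_def)
  finally show ?thesis .
qed

lemma emeasure_lborel_Int_Icc_pos:
  fixes B :: "real set"
  assumes "B \<in> sets borel" "emeasure lborel B > 0"
  obtains r where "emeasure lborel (B \<inter> {-r..r}) > 0"
proof -
  have "(\<Union>n. B \<inter> {-real n..real n}) = B"
  proof (intro equalityI subsetI)
    fix y assume "y \<in> B"
    moreover obtain n :: nat where "\<bar>y\<bar> \<le> real n"
      using real_arch_simple by blast
    ultimately show "y \<in> (\<Union>n. B \<inter> {-real n..real n})"
      by (auto simp: abs_le_iff intro!: exI[of _ n])
  qed auto
  then have "(SUP n. emeasure lborel (B \<inter> {-real n..real n})) = emeasure lborel B"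
    using assms(1) by (subst SUP_emeasure_incseq) (auto simp: incseq_def)
  then have "0 < (SUP n. emeasure lborel (B \<inter> {-real n..real n}))"
    using assms(2) by simp
  then show thesis
    using that by (auto simp: less_SUP_iff)
qed

lemma phi_irreducible_lborelI:
  assumes "P \<in> borel \<rightarrow>\<^sub>M subprob_algebra borel"
    and "\<And>x B. B \<in> sets borel \<Longrightarrow> emeasure lborel B > 0 \<Longrightarrow> emeasure (P x) B > 0"
  shows "phi_irreducible P lborel"
  unfolding phi_irreducible_def
  using assms by (auto simp: bind_return[OF assms(1)] intro!: exI[of _ 1])

lemma aperiodic_wrtI_equivalent:
  assumes prob: "\<And>x. prob_space (P x)" and sets_P: "\<And>x. sets (P x) = sets borel"
    and null: "\<And>x y B. B \<in> sets borel \<Longrightarrow> emeasure (P x) B = 0 \<Longrightarrow> emeasure (P y) B = 0"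
    and nontrivial: "emeasure \<phi> UNIV \<noteq> 0"
  shows "aperiodic_wrt P \<phi>"
  unfolding aperiodic_wrt_def
proof (intro notI, elim exE conjE)
  fix d :: nat and D :: "nat \<Rightarrow> real set"
  assume d: "2 \<le> d" and D_sets: "\<forall>i<d. D i \<in> sets borel"
    and disj: "\<forall>i<d. \<forall>j<d. i \<noteq> j \<longrightarrow> D i \<inter> D j = {}"
    and cycle: "\<forall>i<d. \<forall>x\<in>D i. emeasure (P x) (D ((i + 1) mod d)) = 1"
    and cover: "emeasure \<phi> (- (\<Union>i<d. D i)) = 0"
  \<comment> \<open>From \<open>x \<in> D i\<close> the chain enters \<open>D j\<close> surely, and from there \<open>D k\<close>; as all
    \<open>P _\<close> share their null sets, \<open>P x\<close> charges the disjoint \<open>D j\<close> and \<open>D k\<close> with total mass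
    exceeding 1.\<close>
  have "(\<Union>i<d. D i) \<noteq> {}"
    using cover nontrivial by (metis Compl_empty_eq)
  then obtain i x where i: "i < d" and x: "x \<in> D i"
    by blast
  define j where "j = (i + 1) mod d"
  define k where "k = (j + 1) mod d"
  have j: "j < d" and k: "k < d"
    using d by (simp_all add: j_def k_def)
  have "j \<noteq> k"
  proof (cases "j + 1 < d")
    case False
    then have "j + 1 = d" using j by simp
    then show ?thesis using d by (simp add: k_def)
  qed (simp add: k_def)
  have Pj: "emeasure (P x) (D j) = 1"
    using cycle i x by (simp add: j_def)
  then obtain y where "y \<in> D j"
    by (cases "D j = {}") auto
  then have "emeasure (P y) (D k) = 1"
    using cycle j by (simp add: k_def)
  then have Pk: "emeasure (P x) (D k) \<noteq> 0"
    using null[of "D k" x y] D_sets k by auto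
  have "emeasure (P x) (D j \<union> D k) = emeasure (P x) (D j) + emeasure (P x) (D k)"
    using D_sets disj j k \<open>j \<noteq> k\<close> sets_P by (intro plus_emeasure[symmetric]) auto
  also have "\<dots> > 1"
    using Pj Pk by (simp add: zero_less_iff_neq_zero)
  finally show False
    using prob_space.emeasure_le_1[OF prob, of x "D j \<union> D k"] by simp
qed

lemma small_set_lborelI:
  assumes P: "P \<in> borel \<rightarrow>\<^sub>M subprob_algebra borel" and C: "C \<in> sets borel"
    and K: "K > 0" and I: "I \<in> sets borel" "emeasure lborel I \<noteq> 0"
    and minorant: "\<And>x B. x \<in> C \<Longrightarrow> B \<in> sets borel \<Longrightarrow>
      ennreal K * emeasure lborel (B \<inter> I) \<le> emeasure (P x) B"
  shows "small_set P C"
proof -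
  define \<nu> where "\<nu> = density (density lborel (indicator I)) (\<lambda>_. ennreal K)"
  have \<nu>: "emeasure \<nu> B = ennreal K * emeasure lborel (B \<inter> I)" if "B \<in> sets borel" for B
    using that I by (simp add: \<nu>_def emeasure_density_const emeasure_restricted Int_commute)
  have "emeasure \<nu> UNIV \<noteq> 0"
    using \<nu>[of UNIV] K I by simp
  then show ?thesis
    unfolding small_set_def using C minorant P \<nu>
    by (intro conjI exI[of _ "1::nat"] exI[of _ \<nu>]) (auto simp: \<nu>_def bind_return[OF P])
qed

abbreviation std_normal :: "real measure" where
  "std_normal \<equiv> density lborel std_normal_density"

interpretation std_normal: prob_space std_normal
  by (rule prob_space_normal_density) simp

lemma std_normal_density_pos: "std_normal_density z > 0"
  by (simp add: std_normal_density_def)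

lemma std_normal_density_antimono:
  "\<bar>z\<bar> \<le> M \<Longrightarrow> std_normal_density M \<le> std_normal_density z"
  unfolding std_normal_density_def
  using abs_le_square_iff[of z M] by (intro mult_left_mono) auto

lemma std_normal_eq_0_iff:
  assumes "F \<in> sets borel"
  shows "emeasure std_normal F = 0 \<longleftrightarrow> emeasure lborel F = 0"
proof -
  have "F \<in> null_sets std_normal \<longleftrightarrow> (AE z in lborel. z \<notin> F)"
    using assms std_normal_density_pos
    by (subst null_sets_density_iff) (auto intro!: AE_cong simp: less_le)
  also have "\<dots> \<longleftrightarrow> F \<in> null_sets lborel"
    using assms by (simp add: AE_iff_null_sets)
  finally show ?thesis using assms by (simp add: null_sets_def)
qed

lemma std_normal_ge_lborel:
  assumes "F \<in> sets borel" "F \<subseteq> {-M..M}"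
  shows "ennreal (std_normal_density M) * emeasure lborel F \<le> emeasure std_normal F"
proof -
  have "ennreal (std_normal_density M) * emeasure lborel F
      = (\<integral>\<^sup>+ z. ennreal (std_normal_density M) * indicator F z \<partial>lborel)"
    using assms by (simp add: nn_integral_cmult_indicator)
  also have "\<dots> \<le> (\<integral>\<^sup>+ z. ennreal (std_normal_density z) * indicator F z \<partial>lborel)"
    using assms std_normal_density_antimono
    by (intro nn_integral_mono) (auto simp: indicator_def abs_le_iff)
  also have "\<dots> = emeasure std_normal F"
    using assms by (simp add: emeasure_density)
  finally show ?thesis .
qed

lemma measure_std_normal_Ioi_pos: "measure std_normal {M<..} > 0"
proof -
  have "emeasure std_normal {M<..<M+1} \<noteq> 0"
    by (subst std_normal_eq_0_iff) auto
  then have "measure std_normal {M<..<M+1} > 0"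
    by (simp add: std_normal.emeasure_eq_measure less_le)
  also have "\<dots> \<le> measure std_normal {M<..}"
    by (intro std_normal.finite_measure_mono) auto
  finally show ?thesis .
qed

lemma product_prob_space_std_normal: "product_prob_space (\<lambda>_::nat. std_normal)"
  by (simp add: product_prob_space_def product_prob_space_axioms_def product_sigma_finite_def
      prob_space_imp_sigma_finite std_normal.prob_space_axioms)

lemma prob_space_min_normal_law: "prob_space (min_normal_law lam)"
  unfolding min_normal_law_def
  by (intro prob_space.prob_space_distr prob_space_PiM std_normal.prob_space_axioms) measurable

lemma sets_min_normal_law [simp]: "sets (min_normal_law lam) = sets borel"
  by (simp add: min_normal_law_def)

lemma emeasure_min_normal_law:
  assumes "F \<in> sets borel"
  shows "emeasure (min_normal_law lam) F = emeasure (\<Pi>\<^sub>M i\<in>{..<lam}. std_normal)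
           {\<omega> \<in> space (\<Pi>\<^sub>M i\<in>{..<lam}. std_normal). Min (\<omega> ` {..<lam}) \<in> F}"
  unfolding min_normal_law_def using assms
  by (subst emeasure_distr) (auto simp: vimage_def Int_def conj_commute)

lemma min_normal_law_lborel_null:
  assumes "lam \<ge> 1" "F \<in> sets borel" "emeasure lborel F = 0"
  shows "emeasure (min_normal_law lam) F = 0"
proof -
  let ?P = "\<Pi>\<^sub>M i\<in>{..<lam}. std_normal"
  let ?E = "\<lambda>i. {\<omega> \<in> space ?P. \<omega> i \<in> F}"
  have E_sets: "?E i \<in> sets ?P" if "i < lam" for i
    using that assms(2) by (intro sets_Collect_single) auto
  have "{\<omega> \<in> space ?P. Min (\<omega> ` {..<lam}) \<in> F} \<subseteq> (\<Union>i<lam. ?E i)"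
  proof safe
    fix \<omega> assume "\<omega> \<in> space ?P" "Min (\<omega> ` {..<lam}) \<in> F"
    moreover have "Min (\<omega> ` {..<lam}) \<in> \<omega> ` {..<lam}"
      using assms(1) by (intro Min_in) (auto simp: lessThan_empty_iff)
    ultimately show "\<omega> \<in> (\<Union>i<lam. ?E i)" by auto
  qed
  then have "emeasure (min_normal_law lam) F \<le> emeasure ?P (\<Union>i<lam. ?E i)"
    using assms(2) E_sets by (subst emeasure_min_normal_law) (auto intro!: emeasure_mono)
  also have "\<dots> \<le> (\<Sum>i<lam. emeasure ?P (?E i))"
    using E_sets by (intro emeasure_subadditive_finite) auto
  also have "\<dots> = (\<Sum>i<lam. emeasure std_normal F)"
  proof (rule sum.cong)
    fix i assume "i \<in> {..<lam}"
    then show "emeasure ?P (?E i) = emeasure std_normal F"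
      using assms(2) by (intro product_prob_space.emeasure_PiM_Collect_single
          [OF product_prob_space_std_normal]) simp_all
  qed simp
  also have "\<dots> = 0"
    using assms(2,3) std_normal_eq_0_iff by simp
  finally show ?thesis by simp
qed

lemma min_normal_law_ge_lborel:
  assumes "lam \<ge> 1"
  obtains K where "K > 0"
    "\<And>F. F \<in> sets borel \<Longrightarrow> F \<subseteq> {-M..M} \<Longrightarrow>
       ennreal K * emeasure lborel F \<le> emeasure (min_normal_law lam) F"
proof
  let ?P = "\<Pi>\<^sub>M i\<in>{..<lam}. std_normal"
  define q where "q = measure std_normal {M<..}"
  show "std_normal_density M * q ^ (lam - 1) > 0"
    using std_normal_density_pos measure_std_normal_Ioi_pos by (simp add: q_def)
  fix F assume F: "F \<in> sets borel" "F \<subseteq> {-M..M}"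
  define X where "X i = (if i = 0 then F else {M<..})" for i :: nat
  \<comment> \<open>On this box the first coordinate is the minimum.\<close>
  let ?box = "{\<omega> \<in> space ?P. \<forall>i\<in>{..<lam}. \<omega> i \<in> X i}"
  obtain k where k: "lam = Suc k" using assms by (cases lam) auto
  have "emeasure ?P ?box = (\<Prod>i<lam. emeasure std_normal (X i))"
    using F by (intro product_prob_space.emeasure_PiM_Collect[OF product_prob_space_std_normal])
      (auto simp: X_def)
  also have "\<dots> = emeasure std_normal F * ennreal q ^ (lam - 1)"
    unfolding k
    by (subst prod.lessThan_Suc_shift) (simp add: X_def std_normal.emeasure_eq_measure q_def)
  finally have box: "emeasure ?P ?box = emeasure std_normal F * ennreal q ^ (lam - 1)" .
  have "?box \<subseteq> {\<omega> \<in> space ?P. Min (\<omega> ` {..<lam}) \<in> F}"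
  proof safe
    fix \<omega> assume \<omega>: "\<omega> \<in> space ?P" "\<forall>i\<in>{..<lam}. \<omega> i \<in> X i"
    then have "\<omega> 0 \<in> F" using k by (auto simp: X_def dest!: bspec[of _ _ 0])
    moreover have "Min (\<omega> ` {..<lam}) = \<omega> 0"
    proof (rule Min_eqI)
      fix y assume "y \<in> \<omega> ` {..<lam}"
      then obtain i where i: "i < lam" "y = \<omega> i" by auto
      have "\<omega> 0 \<le> M" using \<open>\<omega> 0 \<in> F\<close> F(2) by auto
      moreover have "i \<noteq> 0 \<Longrightarrow> M < \<omega> i"
        using \<omega>(2) i by (auto simp: X_def dest!: bspec[of _ _ i])
      ultimately show "\<omega> 0 \<le> y" using i by (cases "i = 0") auto
    qed (use k in auto)
    ultimately show "Min (\<omega> ` {..<lam}) \<in> F" by simp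
  qed
  then have box_le: "emeasure ?P ?box \<le> emeasure (min_normal_law lam) F"
    using F by (subst emeasure_min_normal_law) (auto intro!: emeasure_mono)
  have "ennreal (std_normal_density M * q ^ (lam - 1)) * emeasure lborel F
      = ennreal (std_normal_density M) * emeasure lborel F * ennreal q ^ (lam - 1)"
    using std_normal_density_pos[of M] by (simp add: q_def ennreal_mult ennreal_power mult_ac)
  also have "\<dots> \<le> emeasure std_normal F * ennreal q ^ (lam - 1)"
    by (intro mult_right_mono std_normal_ge_lborel F) simp
  also have "\<dots> \<le> emeasure (min_normal_law lam) F"
    using box box_le by simp
  finally show "ennreal (std_normal_density M * q ^ (lam - 1)) * emeasure lborel F
      \<le> emeasure (min_normal_law lam) F" .
qed

lemma sets_csa_kernel [simp]: "sets (csa_kernel c lam x) = sets borel"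
  by (simp add: csa_kernel_def)

lemma prob_space_csa_kernel: "prob_space (csa_kernel c lam x)"
  unfolding csa_kernel_def
  by (intro prob_space.prob_space_distr prob_space_min_normal_law) (auto cong: measurable_cong_sets)

lemma csa_kernel_measurable: "csa_kernel c lam \<in> borel \<rightarrow>\<^sub>M subprob_algebra borel"
proof -
  have "(\<lambda>x. distr (min_normal_law lam) borel (\<lambda>z. (1 - c) * x + sqrt (c * (2 - c)) * z))
      \<in> borel \<rightarrow>\<^sub>M subprob_algebra borel"
    using prob_space_imp_subprob_space[OF prob_space_min_normal_law[of lam]]
    by (intro measurable_distr2[where M=borel]) (measurable, simp add: space_subprob_algebra)
  then show ?thesis
    unfolding csa_kernel_def[abs_def] .
qed

lemma emeasure_csa_kernel:
  assumes "B \<in> sets borel"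
  shows "emeasure (csa_kernel c lam x) B
    = emeasure (min_normal_law lam) {z. (1 - c) * x + sqrt (c * (2 - c)) * z \<in> B}"
  unfolding csa_kernel_def using assms
  by (subst emeasure_distr) (auto simp: vimage_def cong: measurable_cong_sets)

lemma csa_kernel_lborel_null:
  assumes "0 < c" "c < 2" "lam \<ge> 1" "B \<in> sets borel" "emeasure lborel B = 0"
  shows "emeasure (csa_kernel c lam x) B = 0"
proof -
  define s where "s = sqrt (c * (2 - c))"
  have s: "s > 0" using assms(1,2) by (simp add: s_def)
  let ?E = "{z. (1 - c) * x + s * z \<in> B}"
  have E_sets: "?E \<in> sets borel"
    using assms(4) by measurable
  have "ennreal s * emeasure lborel ?E = 0"
    using emeasure_lborel_affine_preimage[OF s assms(4)] assms(5) by simp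
  then have "emeasure lborel ?E = 0"
    using s by simp
  then show ?thesis
    using assms(3,4) E_sets by (simp add: emeasure_csa_kernel s_def min_normal_law_lborel_null)
qed

lemma csa_kernel_ge_lborel:
  assumes "0 < c" "c < 2" "lam \<ge> 1"
  obtains K where "K > 0"
    "\<And>x B. \<bar>x\<bar> \<le> R \<Longrightarrow> B \<in> sets borel \<Longrightarrow>
       ennreal K * emeasure lborel (B \<inter> {-r..r}) \<le> emeasure (csa_kernel c lam x) B"
proof -
  define s where "s = sqrt (c * (2 - c))"
  have s: "s > 0" using assms(1,2) by (simp add: s_def)
  define M where "M = (r + R) / s"
  obtain K where K: "K > 0" and K_le: "\<And>F. F \<in> sets borel \<Longrightarrow> F \<subseteq> {-M..M} \<Longrightarrow>
      ennreal K * emeasure lborel F \<le> emeasure (min_normal_law lam) F"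
    using min_normal_law_ge_lborel[OF assms(3)] by metis
  show thesis
  proof (rule that)
    show "K / s > 0" using K s by simp
    fix x :: real and B :: "real set"
    assume x: "\<bar>x\<bar> \<le> R" and B: "B \<in> sets borel"
    define E where "E = {z. (1 - c) * x + s * z \<in> B \<inter> {-r..r}}"
    have E_sets: "E \<in> sets borel"
      unfolding E_def using B by measurable
    have "\<bar>(1 - c) * x\<bar> \<le> R"
      using assms(1,2) x by (simp add: abs_mult) (rule order.trans[OF mult_left_le_one_le]; auto)
    then have E_bounded: "E \<subseteq> {-M..M}"
      using s by (auto simp: E_def M_def field_simps abs_le_iff)
    have "ennreal (K / s) * emeasure lborel (B \<inter> {-r..r})
        = ennreal (K / s) * (ennreal s * emeasure lborel E)"
      unfolding E_def using B by (subst emeasure_lborel_affine_preimage[OF s]) auto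
    also have "\<dots> = ennreal K * emeasure lborel E"
      using K s by (simp add: ennreal_mult[symmetric] mult.assoc[symmetric])
    also have "\<dots> \<le> emeasure (min_normal_law lam) E"
      by (rule K_le[OF E_sets E_bounded])
    also have "\<dots> \<le> emeasure (min_normal_law lam) {z. (1 - c) * x + s * z \<in> B}"
      using B by (intro emeasure_mono) (auto simp: E_def)
    also have "\<dots> = emeasure (csa_kernel c lam x) B"
      using B by (simp add: emeasure_csa_kernel s_def)
    finally show "ennreal (K / s) * emeasure lborel (B \<inter> {-r..r})
        \<le> emeasure (csa_kernel c lam x) B" .
  qed
qed

lemma csa_kernel_eq_0_iff:
  assumes "0 < c" "c < 2" "lam \<ge> 1" "B \<in> sets borel"
  shows "emeasure (csa_kernel c lam x) B = 0 \<longleftrightarrow> emeasure lborel B = 0"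
proof
  show "emeasure lborel B = 0" if null: "emeasure (csa_kernel c lam x) B = 0"
  proof (rule ccontr)
    assume "emeasure lborel B \<noteq> 0"
    then obtain r where r: "emeasure lborel (B \<inter> {-r..r}) > 0"
      using emeasure_lborel_Int_Icc_pos[OF assms(4)] by (metis zero_less_iff_neq_zero)
    obtain K where "K > 0"
      and "ennreal K * emeasure lborel (B \<inter> {-r..r}) \<le> emeasure (csa_kernel c lam x) B"
      using csa_kernel_ge_lborel[OF assms(1-3), of "\<bar>x\<bar>" r] assms(4) by (metis order.refl)
    with r null show False
      by (auto simp: ennreal_zero_less_mult_iff)
  qed
qed (rule csa_kernel_lborel_null[OF assms])

theorem lemma12:
  fixes c d_sigma :: real and lam n :: nat
  assumes "0 < c" "c < 1" "lam \<ge> 1" "d_sigma > 0" "n \<ge> 1"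
  shows "(\<exists>\<phi>. phi_irreducible (csa_kernel c lam) \<phi>)
       \<and> (\<forall>\<phi>. phi_irreducible (csa_kernel c lam) \<phi> \<longrightarrow> aperiodic_wrt (csa_kernel c lam) \<phi>)
       \<and> (\<forall>C :: real set. compact C \<longrightarrow> small_set (csa_kernel c lam) C)"
proof (intro conjI allI impI)
  \<comment> \<open>\<open>d_sigma\<close> and \<open>n\<close> do not enter the kernel; the arguments work for all \<open>0 < c < 2\<close>.\<close>
  have c: "0 < c" "c < 2" and lam: "lam \<ge> 1"
    using assms by simp_all
  show "\<exists>\<phi>. phi_irreducible (csa_kernel c lam) \<phi>"
    using csa_kernel_eq_0_iff[OF c lam]
    by (intro exI[of _ lborel] phi_irreducible_lborelI csa_kernel_measurable)
      (simp add: zero_less_iff_neq_zero)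
  show "aperiodic_wrt (csa_kernel c lam) \<phi>" if "phi_irreducible (csa_kernel c lam) \<phi>" for \<phi>
    using that csa_kernel_eq_0_iff[OF c lam]
    by (intro aperiodic_wrtI_equivalent prob_space_csa_kernel) (auto simp: phi_irreducible_def)
  show "small_set (csa_kernel c lam) C" if C: "compact C" for C :: "real set"
  proof -
    obtain R where R: "\<forall>x\<in>C. \<bar>x\<bar> \<le> R"
      using compact_imp_bounded[OF C] bounded_real by blast
    obtain K where "K > 0" and "\<And>x B. \<bar>x\<bar> \<le> R \<Longrightarrow> B \<in> sets borel \<Longrightarrow>
        ennreal K * emeasure lborel (B \<inter> {-1..1}) \<le> emeasure (csa_kernel c lam x) B"
      using csa_kernel_ge_lborel[OF c lam] by metis
    with R show ?thesis
      by (intro small_set_lborelI[where I = "{-1..1}"] csa_kernel_measurable borel_compact C) auto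
  qed
qed

end
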